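(* Assume (A1), (A2), (B)$_T$ for every $T>0$, (C1), (C2) and (C3). Let $x\in E$, $\varepsilon>0$, and let $\sigma$ be an $\varepsilon$-optimal stopping time for $w(x)$. Then \[ \mathbb{E}^x\{\sigma\}\le\frac{\gamma(x)+\mathbb{E}^x\{\zeta^+\}-w(x)+\varepsilon}{-d(x)}. \]
   Context: Let $(E,\rho)$ be a locally compact metric space with Borel $\sigma$-field, and let $(X_t)_{t\ge0}$ be a Feller–Markov process with right-continuous paths on a filtered space $(\Omega,\mathcal F,(\mathcal F_t))$, taking values in $E$; $\mathbb{P}^x$ denotes the law of the process started at $x$ and $\mathbb{E}^x$ the corresponding expectation. Stopping times are with respect to $(\mathcal F_t)$ and may take the value $+\infty$. Write $P_t(x,\cdot)=\mathbb{P}^x\{X_t\in\cdot\}$, $P_t\phi(x)=\mathbb{E}^x\{\phi(X_t)\}$. (A1) $P_t\,\mathcal C_0\subseteq\mathcal C_0$ for all $t\ge0$, where $\mathcal C_0$ is the space of continuous bounded functions $E\to\mathbb R$ vanishing at infinity. (A2) There are a unique probability measure $\mu$ on $E$, a function $K:E\to(0,\infty)$ bounded on compacts and $h:[0,\infty)\to\mathbb R_+$ with $\int_0^\infty h<\infty$ such that $\|P_t(x,\cdot)-\mu\|_{TV}\le K(x)h(t)$ for all $x,t$; furthermore $\mathbb{E}^x\{K(X_T)\}<\infty$ for each $T\ge0$. Let $f:E\to\mathbb R$ be continuous and bounded and $g:E\to\mathbb R$ continuous (possibly unbounded). (B)$_T$: for every $x\in E$ there is a compact ball $\bar B(x,\delta)$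 such that $\zeta_T=\sup_{t\in[0,T]}|g(X_t)|$ satisfies $\lim_{n\to\infty}\sup_{y\in\bar B(x,\delta)}\mathbb{E}^y\{\zeta_T\mathbf 1_{\{\zeta_T>n\}}\}=0$. (C1) $\zeta^+:=\sup_{t\ge0}g^+(X_t)$ is $\mathbb{P}^x$-integrable for every $x$. (C2) For every $x$ and events $A_T\in\mathcal F_T$: if $\lim_{T\to\infty}\mathbb{P}^x(A_T)=0$ then $\lim_{T\to\infty}\mathbb{E}^x\{\mathbf 1_{A_T}g^-(X_T)\}=0$. (C3) For every $x$ there is $d(x)<0$ with $\gamma(x):=\sup_\tau\liminf_{T\to\infty}\mathbb{E}^x\{\int_0^{\tau\wedge T}(f(X_s)-d(x))ds\}<\infty$. The value function is $w(x)=\sup_\tau\liminf_{T\to\infty}\mathbb{E}^x\{\int_0^{\tau\wedge T}f(X_s)\,ds+g(X_{\tau\wedge T})\}$, supremum over all stopping times. A stopping time $\sigma$ is $\varepsilon$-optimal for $w(x)$ if $\liminf_{T\to\infty}\mathbb{E}^x\{\int_0^{\sigma\wedge T}f(X_s)ds+g(X_{\sigma\wedge T})\}\ge w(x)-\varepsilon$. *)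

theory Defs
  imports "HOL-Analysis.Analysis" "HOL-Probability.Probability"
begin

definition C0 :: "('e::metric_space \<Rightarrow> real) set" where
  "C0 = {\<phi>. continuous_on UNIV \<phi> \<and> bounded (range \<phi>) \<and>
            (\<forall>e>0. \<exists>C. compact C \<and> (\<forall>y. y \<notin> C \<longrightarrow> \<bar>\<phi> y\<bar> < e))}"

definition Ptr :: "('e \<Rightarrow> 'w measure) \<Rightarrow> (real \<Rightarrow> 'w \<Rightarrow> 'e) \<Rightarrow> real \<Rightarrow> ('e \<Rightarrow> real) \<Rightarrow> 'e \<Rightarrow> real" where
  "Ptr M X t \<phi> y = (\<integral>\<omega>. \<phi> (X t \<omega>) \<partial>M y)"

text \<open>Markov process with right-continuous paths on (Omega, F, (F_t)), laws P^x = M x.\<close>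
definition markov_process ::
  "'w measure \<Rightarrow> ('e::metric_space \<Rightarrow> 'w measure) \<Rightarrow> (real \<Rightarrow> 'w measure) \<Rightarrow> (real \<Rightarrow> 'w \<Rightarrow> 'e) \<Rightarrow> bool" where
  "markov_process \<Omega> M F X \<longleftrightarrow>
     (\<forall>x. prob_space (M x) \<and> sets (M x) = sets \<Omega>) \<and>
     (\<forall>t\<ge>0. subalgebra \<Omega> (F t)) \<and>
     (\<forall>s t. 0 \<le> s \<longrightarrow> s \<le> t \<longrightarrow> sets (F s) \<subseteq> sets (F t)) \<and>
     (\<forall>t\<ge>0. X t \<in> F t \<rightarrow>\<^sub>M borel) \<and>
     (\<forall>\<omega>\<in>space \<Omega>. \<forall>t\<ge>0. continuous (at_right t) (\<lambda>s. X s \<omega>)) \<and>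
     (\<forall>x. AE \<omega> in M x. X 0 \<omega> = x) \<and>
     (\<forall>t\<ge>0. \<forall>A\<in>sets borel.
         (\<lambda>x. measure (M x) {\<omega>\<in>space \<Omega>. X t \<omega> \<in> A}) \<in> borel_measurable borel) \<and>
     (\<forall>x. \<forall>s\<ge>0. \<forall>t\<ge>0. \<forall>\<phi>::'e \<Rightarrow> real. \<phi> \<in> borel_measurable borel \<longrightarrow> bounded (range \<phi>) \<longrightarrow>
         (AE \<omega> in M x. real_cond_exp (M x) (F t) (\<lambda>\<omega>. \<phi> (X (t + s) \<omega>)) \<omega>
                         = Ptr M X s \<phi> (X t \<omega>)))"

definition ext_stopping_time :: "(real \<Rightarrow> 'w measure) \<Rightarrow> ('w \<Rightarrow> ennreal) \<Rightarrow> bool" where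
  "ext_stopping_time F \<tau> \<longleftrightarrow>
     (\<forall>t\<ge>0. {\<omega>\<in>space (F t). \<tau> \<omega> \<le> ennreal t} \<in> sets (F t))"

definition stop_min :: "('w \<Rightarrow> ennreal) \<Rightarrow> real \<Rightarrow> 'w \<Rightarrow> real" where
  "stop_min \<tau> T \<omega> = enn2real (min (\<tau> \<omega>) (ennreal T))"

definition reward ::
  "('e \<Rightarrow> 'w measure) \<Rightarrow> (real \<Rightarrow> 'w \<Rightarrow> 'e) \<Rightarrow> ('e \<Rightarrow> real) \<Rightarrow> ('e \<Rightarrow> real) \<Rightarrow> 'e \<Rightarrow> ('w \<Rightarrow> ennreal) \<Rightarrow> ereal" where
  "reward M X f g x \<tau> =
     Liminf at_top (\<lambda>T. ereal (\<integral>\<omega>. integral {0..stop_min \<tau> T \<omega>} (\<lambda>s. f (X s \<omega>))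
                                      + g (X (stop_min \<tau> T \<omega>) \<omega>) \<partial>M x))"

definition value_fn ::
  "('e \<Rightarrow> 'w measure) \<Rightarrow> (real \<Rightarrow> 'w measure) \<Rightarrow> (real \<Rightarrow> 'w \<Rightarrow> 'e) \<Rightarrow> ('e \<Rightarrow> real) \<Rightarrow> ('e \<Rightarrow> real) \<Rightarrow> 'e \<Rightarrow> ereal" where
  "value_fn M F X f g x = (SUP \<tau>\<in>{\<tau>. ext_stopping_time F \<tau>}. reward M X f g x \<tau>)"

definition gamma_fn ::
  "('e \<Rightarrow> 'w measure) \<Rightarrow> (real \<Rightarrow> 'w measure) \<Rightarrow> (real \<Rightarrow> 'w \<Rightarrow> 'e) \<Rightarrow> ('e \<Rightarrow> real) \<Rightarrow> ('e \<Rightarrow> real) \<Rightarrow> 'e \<Rightarrow> ereal" where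
  "gamma_fn M F X f d x = value_fn M F X (\<lambda>y. f y - d x) (\<lambda>_. 0) x"

definition zetaT :: "('e \<Rightarrow> real) \<Rightarrow> (real \<Rightarrow> 'w \<Rightarrow> 'e) \<Rightarrow> real \<Rightarrow> 'w \<Rightarrow> ennreal" where
  "zetaT g X T \<omega> = (SUP t\<in>{0..T}. ennreal \<bar>g (X t \<omega>)\<bar>)"

definition zeta_plus :: "('e \<Rightarrow> real) \<Rightarrow> (real \<Rightarrow> 'w \<Rightarrow> 'e) \<Rightarrow> 'w \<Rightarrow> ennreal" where
  "zeta_plus g X \<omega> = (SUP t\<in>{0..}. ennreal (max 0 (g (X t \<omega>))))"

definition tv_dist :: "'e measure \<Rightarrow> 'e measure \<Rightarrow> real" where
  "tv_dist P Q = (SUP A\<in>sets P. \<bar>measure P A - measure Q A\<bar>)"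

end

theory Submission
  imports Defs
begin

text \<open>Fix \<open>T\<^sub>0 \<ge> 0\<close> and let \<open>T \<ge> T\<^sub>0\<close>. Writing \<open>f = (f - d x) + d x\<close> in the running reward gives
  \<open>E[\<integral>\<^sub>0\<^sup>\<tau> f(X\<^sub>s) ds + g(X\<^sub>\<tau>)] = E[\<integral>\<^sub>0\<^sup>\<tau> (f(X\<^sub>s) - d x) ds] + d x E[\<tau>] + E[g(X\<^sub>\<tau>)]\<close> for \<open>\<tau> = min \<sigma> T\<close>.
  The last term is at most \<open>E \<zeta>\<^sup>+\<close>, and since \<open>d x < 0\<close>, \<open>d x E[min \<sigma> T] \<le> d x E[min \<sigma> T\<^sub>0]\<close>. Taking the
  liminf in \<open>T\<close> and using \<open>\<epsilon>\<close>-optimality of \<open>\<sigma>\<close> yields \<open>w(x) - \<epsilon> \<le> \<gamma>(x) + d x E[min \<sigma> T\<^sub>0] + E \<zeta>\<^sup>+\<close>;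
  solving for \<open>E[min \<sigma> T\<^sub>0]\<close> and letting \<open>T\<^sub>0 \<rightarrow> \<infinity>\<close> (monotone convergence) gives the bound.
  Hypothesis (B) only serves to make \<open>g(X\<^sub>\<tau>)\<close> integrable.\<close>

lemma borel_measurable_right_continuous_process_at:
  fixes X :: "real \<Rightarrow> 'w \<Rightarrow> 'e::metric_space"
  assumes Xm: "\<And>t. t \<ge> 0 \<Longrightarrow> X t \<in> borel_measurable N"
    and rc: "\<And>\<omega> t. \<omega> \<in> space N \<Longrightarrow> t \<ge> 0 \<Longrightarrow> continuous (at_right t) (\<lambda>s. X s \<omega>)"
    and r[measurable]: "r \<in> borel_measurable N" and r_nonneg: "\<And>\<omega>. \<omega> \<in> space N \<Longrightarrow> r \<omega> \<ge> 0"
  shows "(\<lambda>\<omega>. X (r \<omega>) \<omega>) \<in> borel_measurable N"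
proof -
  text \<open>Approximate \<open>r\<close> strictly from the right by grid points; at a grid point the process
    is measurable, and right-continuity of the paths gives the pointwise limit.\<close>
  define q where "q n \<omega> = (real (nat \<lfloor>real (Suc n) * r \<omega>\<rfloor>) + 1) / real (Suc n)" for n \<omega>
  have q_measurable: "(\<lambda>\<omega>. X (q n \<omega>) \<omega>) \<in> borel_measurable N" for n
  proof -
    have "(\<lambda>\<omega>. nat \<lfloor>real (Suc n) * r \<omega>\<rfloor>) \<in> N \<rightarrow>\<^sub>M count_space UNIV"
      by measurable
    then have "(\<lambda>\<omega>. (\<lambda>k::nat. X ((real k + 1) / real (Suc n))) (nat \<lfloor>real (Suc n) * r \<omega>\<rfloor>) \<omega>)
        \<in> borel_measurable N"
      by (rule measurable_compose_countable[rotated]) (rule Xm, simp)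
    then show ?thesis by (simp add: q_def)
  qed
  show ?thesis
  proof (rule borel_measurable_LIMSEQ_metric[OF q_measurable])
    fix \<omega> assume \<omega>: "\<omega> \<in> space N"
    have q_bounds: "r \<omega> < q n \<omega> \<and> q n \<omega> \<le> r \<omega> + 1 / real (Suc n)" for n
    proof -
      define m where "m = real (Suc n)"
      have m: "m > 0" by (simp add: m_def)
      have q: "q n \<omega> = (of_int \<lfloor>m * r \<omega>\<rfloor> + 1) / m"
        using r_nonneg[OF \<omega>] by (simp add: q_def m_def)
      have fl: "of_int \<lfloor>m * r \<omega>\<rfloor> \<le> m * r \<omega>" "m * r \<omega> < of_int \<lfloor>m * r \<omega>\<rfloor> + 1"
        by linarith+
      have "r \<omega> < (of_int \<lfloor>m * r \<omega>\<rfloor> + 1) / m"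
        using fl m by (simp add: field_simps)
      moreover have "(of_int \<lfloor>m * r \<omega>\<rfloor> + 1) / m \<le> r \<omega> + 1 / m"
        using fl m by (simp add: field_simps)
      ultimately show ?thesis by (simp add: q m_def)
    qed
    have upper_limit: "(\<lambda>n. r \<omega> + 1 / real (Suc n)) \<longlonglongrightarrow> r \<omega>"
      using tendsto_add[OF tendsto_const LIMSEQ_Suc[OF lim_1_over_n], of "r \<omega>"] by simp
    have "(\<lambda>n. q n \<omega>) \<longlonglongrightarrow> r \<omega>"
      by (rule tendsto_sandwich[OF _ _ tendsto_const upper_limit])
        (use q_bounds in \<open>auto intro!: always_eventually less_imp_le\<close>)
    then have "filterlim (\<lambda>n. q n \<omega>) (at_right (r \<omega>)) sequentially"
      by (rule tendsto_imp_filterlim_at_right) (use q_bounds in \<open>auto intro!: always_eventually\<close>)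
    moreover have "((\<lambda>s. X s \<omega>) \<longlongrightarrow> X (r \<omega>) \<omega>) (at_right (r \<omega>))"
      using rc[OF \<omega> r_nonneg[OF \<omega>]] by (simp add: continuous_within)
    ultimately show "(\<lambda>n. X (q n \<omega>) \<omega>) \<longlonglongrightarrow> X (r \<omega>) \<omega>"
      by (rule filterlim_compose[rotated])
  qed
qed

lemma set_integrable_right_continuous_path:
  fixes p :: "real \<Rightarrow> 'e::metric_space" and f :: "'e \<Rightarrow> real"
  assumes rc: "\<And>t. t \<ge> 0 \<Longrightarrow> continuous (at_right t) p"
    and f_cont: "continuous_on UNIV f" and f_bound: "\<And>y. \<bar>f y\<bar> \<le> B"
  shows "set_integrable lborel {0..a} (\<lambda>s. f (p (max 0 s)))"
proof -
  have "(\<lambda>s. p (max 0 s)) \<in> borel_measurable lborel"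
    by (rule borel_measurable_right_continuous_process_at[where X="\<lambda>t s. p t"]) (use rc in auto)
  then have "(\<lambda>s. f (p (max 0 s))) \<in> borel_measurable lborel"
    using borel_measurable_continuous_onI[OF f_cont] by (rule measurable_compose)
  then show ?thesis
    unfolding set_integrable_def
    by (intro integrableI_bounded_set[where A="{0..a}" and B=B])
      (use f_bound in \<open>auto simp: indicator_def emeasure_lborel_Icc_eq\<close>)
qed

lemma path_integrable_on:
  fixes p :: "real \<Rightarrow> 'e::metric_space" and f :: "'e \<Rightarrow> real"
  assumes "\<And>t. t \<ge> 0 \<Longrightarrow> continuous (at_right t) p"
    and "continuous_on UNIV f" and "\<And>y. \<bar>f y\<bar> \<le> B"
  shows "(\<lambda>s. f (p s)) integrable_on {0..a}"
proof -
  have "(\<lambda>s. f (p (max 0 s))) integrable_on {0..a}"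
    using set_borel_integral_eq_integral(1)[OF set_integrable_right_continuous_path[OF assms]] .
  then show ?thesis
    by (rule integrable_spike_finite[where S="{}", rotated 2]) auto
qed

lemma borel_measurable_path_integral:
  fixes X :: "real \<Rightarrow> 'w \<Rightarrow> 'e::metric_space" and f :: "'e \<Rightarrow> real"
  assumes Xm: "\<And>t. t \<ge> 0 \<Longrightarrow> X t \<in> borel_measurable N"
    and rc: "\<And>\<omega> t. \<omega> \<in> space N \<Longrightarrow> t \<ge> 0 \<Longrightarrow> continuous (at_right t) (\<lambda>s. X s \<omega>)"
    and r[measurable]: "r \<in> borel_measurable N"
    and f_cont: "continuous_on UNIV f" and f_bound: "\<And>y. \<bar>f y\<bar> \<le> B"
  shows "(\<lambda>\<omega>. integral {0..r \<omega>} (\<lambda>s. f (X s \<omega>))) \<in> borel_measurable N"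
proof -
  have [measurable]: "f \<in> borel_measurable borel"
    using f_cont by (rule borel_measurable_continuous_onI)
  let ?P = "N \<Otimes>\<^sub>M (lborel :: real measure)"
  have "(\<lambda>p. X (max 0 (snd p)) (fst p)) \<in> borel_measurable ?P"
    by (rule borel_measurable_right_continuous_process_at[where X="\<lambda>t p. X t (fst p)"])
      (use Xm rc in \<open>auto simp: space_pair_measure\<close>)
  then have [measurable]: "(\<lambda>p. f (X (max 0 (snd p)) (fst p))) \<in> borel_measurable ?P"
    by measurable
  have "integral {0..r \<omega>} (\<lambda>s. f (X s \<omega>))
      = (\<integral>s. (if 0 \<le> s \<and> s \<le> r \<omega> then f (X (max 0 s) \<omega>) else 0) \<partial>lborel)" if \<omega>: "\<omega> \<in> space N" for \<omega>
  proof -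
    have "integral {0..r \<omega>} (\<lambda>s. f (X s \<omega>)) = integral {0..r \<omega>} (\<lambda>s. f (X (max 0 s) \<omega>))"
      by (rule integral_cong) auto
    also have "\<dots> = (LINT s : {0..r \<omega>} | lborel. f (X (max 0 s) \<omega>))"
      by (rule set_borel_integral_eq_integral(2)[symmetric],
          rule set_integrable_right_continuous_path[OF rc[OF \<omega>] f_cont f_bound])
    also have "\<dots> = (\<integral>s. (if 0 \<le> s \<and> s \<le> r \<omega> then f (X (max 0 s) \<omega>) else 0) \<partial>lborel)"
      unfolding set_lebesgue_integral_def
      by (rule Bochner_Integration.integral_cong) (auto simp: indicator_def)
    finally show ?thesis .
  qed
  moreover have "(\<lambda>\<omega>. \<integral>s. (if 0 \<le> s \<and> s \<le> r \<omega> then f (X (max 0 s) \<omega>) else 0) \<partial>lborel)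
      \<in> borel_measurable N"
    by (rule lborel.borel_measurable_lebesgue_integral) measurable
  ultimately show ?thesis
    by (simp cong: measurable_cong)
qed

lemma markov_processD:
  assumes "markov_process \<Omega> M F X"
  shows markov_process_prob_space: "prob_space (M x)"
    and markov_process_sets_eq: "sets (M x) = sets \<Omega>"
    and markov_process_filtration: "t \<ge> 0 \<Longrightarrow> subalgebra \<Omega> (F t)"
    and markov_process_adapted: "t \<ge> 0 \<Longrightarrow> X t \<in> borel_measurable (F t)"
    and markov_process_paths_right_continuous:
      "\<omega> \<in> space \<Omega> \<Longrightarrow> t \<ge> 0 \<Longrightarrow> continuous (at_right t) (\<lambda>s. X s \<omega>)"
  using assms unfolding markov_process_def by (elim conjE; metis)+

lemma markov_process_subalgebra:
  assumes "markov_process \<Omega> M F X" "t \<ge> 0"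
  shows "subalgebra (M x) (F t)"
proof -
  have "sets (M x) = sets \<Omega>"
    by (rule markov_process_sets_eq[OF assms(1)])
  moreover from this have "space (M x) = space \<Omega>"
    by (rule sets_eq_imp_space_eq)
  ultimately show ?thesis
    using markov_process_filtration[OF assms] by (simp add: subalgebra_def)
qed

lemma markov_process_measurable:
  assumes "markov_process \<Omega> M F X" "t \<ge> 0"
  shows "X t \<in> borel_measurable (M x)"
  by (rule measurable_from_subalg[OF markov_process_subalgebra[OF assms] markov_process_adapted[OF assms]])

lemma markov_process_right_continuous:
  assumes "markov_process \<Omega> M F X" "\<omega> \<in> space (M x)" "t \<ge> 0"
  shows "continuous (at_right t) (\<lambda>s. X s \<omega>)"
proof -
  have "space (M x) = space \<Omega>"
    by (rule sets_eq_imp_space_eq[OF markov_process_sets_eq[OF assms(1)]])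
  then show ?thesis
    using markov_process_paths_right_continuous[OF assms(1) _ assms(3)] assms(2) by simp
qed

lemma ennreal_stop_min: "ennreal (stop_min \<tau> T \<omega>) = min (\<tau> \<omega>) (ennreal T)"
  unfolding stop_min_def by (simp add: min_less_iff_disj)

lemma stop_min_nonneg: "0 \<le> stop_min \<tau> T \<omega>"
  by (simp add: stop_min_def)

lemma stop_min_le: "0 \<le> T \<Longrightarrow> stop_min \<tau> T \<omega> \<le> T"
  by (simp add: stop_min_def enn2real_leI)

lemma stop_min_mono:
  assumes "S \<le> T"
  shows "stop_min \<tau> S \<omega> \<le> stop_min \<tau> T \<omega>"
proof -
  have "min (\<tau> \<omega>) (ennreal S) \<le> min (\<tau> \<omega>) (ennreal T)"
    using assms by (intro min.mono ennreal_leI) auto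
  then show ?thesis
    unfolding stop_min_def by (rule enn2real_mono) (simp add: min_less_iff_disj)
qed

lemma stop_min_le_iff:
  assumes "0 \<le> a" "a < T"
  shows "stop_min \<tau> T \<omega> \<le> a \<longleftrightarrow> \<tau> \<omega> \<le> ennreal a"
proof -
  have "stop_min \<tau> T \<omega> \<le> a \<longleftrightarrow> min (\<tau> \<omega>) (ennreal T) \<le> ennreal a"
    using assms(1) by (simp flip: ennreal_stop_min add: stop_min_nonneg)
  also have "\<dots> \<longleftrightarrow> \<tau> \<omega> \<le> ennreal a"
    using assms by (auto simp: min_le_iff_disj ennreal_less_iff not_le intro: order.trans)
  finally show ?thesis .
qed

lemma SUP_stop_min: "(SUP n. ennreal (stop_min \<tau> (real n) \<omega>)) = \<tau> \<omega>"
proof -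
  have "(SUP n. ennreal (stop_min \<tau> (real n) \<omega>)) = (SUP n. min (\<tau> \<omega>) (of_nat n))"
    by (simp add: ennreal_stop_min ennreal_of_nat_eq_real_of_nat)
  also have "\<dots> = min (\<tau> \<omega>) (SUP n. of_nat n)"
    by (simp add: inf_SUP[symmetric] inf_min[symmetric])
  finally show ?thesis
    by (simp add: ennreal_SUP_of_nat_eq_top)
qed

lemma borel_measurable_stop_min:
  assumes \<tau>: "ext_stopping_time F \<tau>" and sub: "\<And>t. t \<ge> 0 \<Longrightarrow> subalgebra N (F t)" and "0 \<le> T"
  shows "stop_min \<tau> T \<in> borel_measurable N"
  unfolding borel_measurable_iff_le
proof
  fix a :: real
  consider "a < 0" | "T \<le> a" | "0 \<le> a" "a < T" by linarith
  then show "{\<omega> \<in> space N. stop_min \<tau> T \<omega> \<le> a} \<in> sets N"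
  proof cases
    case 1
    then have "{\<omega> \<in> space N. stop_min \<tau> T \<omega> \<le> a} = {}"
      using stop_min_nonneg[of \<tau> T] by (auto simp: not_le intro: less_le_trans)
    then show ?thesis by (metis sets.empty_sets)
  next
    case 2
    then have "{\<omega> \<in> space N. stop_min \<tau> T \<omega> \<le> a} = space N"
      using stop_min_le[OF \<open>0 \<le> T\<close>, of \<tau>] by (auto intro: order_trans)
    then show ?thesis by (metis sets.top)
  next
    case 3
    have "space (F a) = space N" "sets (F a) \<subseteq> sets N"
      using sub[OF 3(1)] by (auto simp: subalgebra_def)
    then have "{\<omega> \<in> space N. stop_min \<tau> T \<omega> \<le> a} = {\<omega> \<in> space (F a). \<tau> \<omega> \<le> ennreal a}"
      by (auto simp: stop_min_le_iff[OF 3])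
    also have "\<dots> \<in> sets (F a)"
      using \<tau> 3 by (simp add: ext_stopping_time_def)
    finally show ?thesis
      using \<open>sets (F a) \<subseteq> sets N\<close> by (rule rev_subsetD)
  qed
qed

lemma integrable_stop_min:
  assumes "finite_measure N" "stop_min \<tau> T \<in> borel_measurable N" "0 \<le> T"
  shows "integrable N (stop_min \<tau> T)"
  using assms
  by (intro finite_measure.integrable_const_bound[where B=T] AE_I2) (auto simp: stop_min_nonneg stop_min_le)

lemma nn_integral_eq_SUP_integral_stop_min:
  assumes "finite_measure N" "\<And>T. T \<ge> 0 \<Longrightarrow> stop_min \<tau> T \<in> borel_measurable N"
  shows "(\<integral>\<^sup>+\<omega>. \<tau> \<omega> \<partial>N) = (SUP n. ennreal (\<integral>\<omega>. stop_min \<tau> (real n) \<omega> \<partial>N))"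
proof -
  have "(\<integral>\<^sup>+\<omega>. \<tau> \<omega> \<partial>N) = (\<integral>\<^sup>+\<omega>. (SUP n. ennreal (stop_min \<tau> (real n) \<omega>)) \<partial>N)"
    by (simp add: SUP_stop_min)
  also have "\<dots> = (SUP n. \<integral>\<^sup>+\<omega>. ennreal (stop_min \<tau> (real n) \<omega>) \<partial>N)"
    using assms(2) by (intro nn_integral_monotone_convergence_SUP)
      (auto simp: incseq_def le_fun_def intro!: ennreal_leI stop_min_mono)
  also have "\<dots> = (SUP n. ennreal (\<integral>\<omega>. stop_min \<tau> (real n) \<omega> \<partial>N))"
    using assms by (simp add: nn_integral_eq_integral integrable_stop_min stop_min_nonneg)
  finally show ?thesis .
qed

lemma integrable_if_dominated_with_finite_tail:
  fixes \<phi> :: "'w \<Rightarrow> real" and Z :: "'w \<Rightarrow> ennreal"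
  assumes "finite_measure N" and \<phi>[measurable]: "\<phi> \<in> borel_measurable N"
    and dominated: "\<And>\<omega>. ennreal \<bar>\<phi> \<omega>\<bar> \<le> Z \<omega>"
    and tail: "(\<integral>\<^sup>+\<omega>. Z \<omega> * indicator {\<omega>. Z \<omega> > of_nat n} \<omega> \<partial>N) < \<infinity>"
  shows "integrable N \<phi>"
proof (rule integrableI_bounded)
  interpret finite_measure N by fact
  have "(\<integral>\<^sup>+\<omega>. ennreal (norm (\<phi> \<omega>)) \<partial>N)
      = (\<integral>\<^sup>+\<omega>. ennreal \<bar>\<phi> \<omega>\<bar> * indicator {\<omega>. \<bar>\<phi> \<omega>\<bar> \<le> real n} \<omega> \<partial>N)
        + (\<integral>\<^sup>+\<omega>. ennreal \<bar>\<phi> \<omega>\<bar> * indicator {\<omega>. \<bar>\<phi> \<omega>\<bar> > real n} \<omega> \<partial>N)"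
    by (subst nn_integral_add[symmetric]) (auto intro!: nn_integral_cong simp: indicator_def)
  also have "\<dots> \<le> (\<integral>\<^sup>+\<omega>. ennreal (real n) \<partial>N)
        + (\<integral>\<^sup>+\<omega>. Z \<omega> * indicator {\<omega>. Z \<omega> > of_nat n} \<omega> \<partial>N)"
  proof (intro add_mono nn_integral_mono)
    fix \<omega>
    show "ennreal \<bar>\<phi> \<omega>\<bar> * indicator {\<omega>. \<bar>\<phi> \<omega>\<bar> \<le> real n} \<omega> \<le> ennreal (real n)"
      by (auto simp: indicator_def)
    have "of_nat n < Z \<omega>" if "real n < \<bar>\<phi> \<omega>\<bar>"
    proof -
      have "of_nat n < ennreal \<bar>\<phi> \<omega>\<bar>"
        using that by (simp add: ennreal_of_nat_eq_real_of_nat ennreal_lessI)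
      then show ?thesis
        using dominated by (rule less_le_trans)
    qed
    then show "ennreal \<bar>\<phi> \<omega>\<bar> * indicator {\<omega>. \<bar>\<phi> \<omega>\<bar> > real n} \<omega>
        \<le> Z \<omega> * indicator {\<omega>. Z \<omega> > of_nat n} \<omega>"
      using dominated by (auto simp: indicator_def)
  qed
  also have "\<dots> < \<infinity>"
    using tail by (simp add: ennreal_mult_eq_top_iff less_top[symmetric])
  finally show "(\<integral>\<^sup>+\<omega>. ennreal (norm (\<phi> \<omega>)) \<partial>N) < \<infinity>" .
qed (rule \<phi>)

lemma integral_le_enn2real_nn_integral:
  fixes \<phi> :: "'w \<Rightarrow> real" and Z :: "'w \<Rightarrow> ennreal"
  assumes "integrable N \<phi>" "\<And>\<omega>. ennreal (max 0 (\<phi> \<omega>)) \<le> Z \<omega>" "(\<integral>\<^sup>+\<omega>. Z \<omega> \<partial>N) < \<infinity>"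
  shows "(\<integral>\<omega>. \<phi> \<omega> \<partial>N) \<le> enn2real (\<integral>\<^sup>+\<omega>. Z \<omega> \<partial>N)"
proof -
  have "(\<integral>\<omega>. \<phi> \<omega> \<partial>N) \<le> (\<integral>\<omega>. max 0 (\<phi> \<omega>) \<partial>N)"
    using assms(1) by (intro integral_mono) auto
  also have "\<dots> = enn2real (\<integral>\<^sup>+\<omega>. ennreal (max 0 (\<phi> \<omega>)) \<partial>N)"
    using assms(1) by (intro integral_eq_nn_integral) auto
  also have "\<dots> \<le> enn2real (\<integral>\<^sup>+\<omega>. Z \<omega> \<partial>N)"
    using assms(2,3) by (intro enn2real_mono nn_integral_mono) auto
  finally show ?thesis .
qed

lemma ex_less_top_of_SUP_tendsto_zero:
  fixes I :: "nat \<Rightarrow> 'a \<Rightarrow> ennreal"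
  assumes "(\<lambda>n. SUP z\<in>A. I n z) \<longlonglongrightarrow> 0" "x \<in> A"
  shows "\<exists>n. I n x < \<infinity>"
proof -
  obtain n where "(SUP z\<in>A. I n z) < 1"
    using order_tendstoD(2)[OF assms(1), of 1] by (auto dest: eventually_happens)
  then have "I n x < 1"
    by (rule le_less_trans[OF SUP_upper[OF assms(2)]])
  then have "I n x < top"
    using ennreal_one_less_top by (rule less_trans)
  then show ?thesis by auto
qed

lemma integrable_path_integral:
  fixes X :: "real \<Rightarrow> 'w \<Rightarrow> 'e::metric_space" and f :: "'e \<Rightarrow> real"
  assumes "finite_measure N" and Xm: "\<And>t. t \<ge> 0 \<Longrightarrow> X t \<in> borel_measurable N"
    and rc: "\<And>\<omega> t. \<omega> \<in> space N \<Longrightarrow> t \<ge> 0 \<Longrightarrow> continuous (at_right t) (\<lambda>s. X s \<omega>)"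
    and r: "r \<in> borel_measurable N" and r_bounds: "\<And>\<omega>. 0 \<le> r \<omega> \<and> r \<omega> \<le> T"
    and f_cont: "continuous_on UNIV f" and f_bound: "\<And>y. \<bar>f y\<bar> \<le> B"
  shows "integrable N (\<lambda>\<omega>. integral {0..r \<omega>} (\<lambda>s. f (X s \<omega>)))"
proof (rule finite_measure.integrable_const_bound[OF assms(1) AE_I2])
  fix \<omega> assume \<omega>: "\<omega> \<in> space N"
  have "B \<ge> 0"
    using f_bound[of undefined] by linarith
  have "norm (integral {0..r \<omega>} (\<lambda>s. f (X s \<omega>))) \<le> integral {0..r \<omega>} (\<lambda>s. B)"
    by (rule integral_norm_bound_integral[OF path_integrable_on[OF rc[OF \<omega>] f_cont f_bound]])
      (use f_bound in auto)
  also have "\<dots> \<le> B * T"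
    using r_bounds[of \<omega>] \<open>B \<ge> 0\<close> by (simp add: mult_left_mono mult.commute)
  finally show "norm (integral {0..r \<omega>} (\<lambda>s. f (X s \<omega>))) \<le> B * T" .
qed (rule borel_measurable_path_integral[OF Xm rc r f_cont f_bound])

lemma integral_path_integral_diff_const:
  fixes X :: "real \<Rightarrow> 'w \<Rightarrow> 'e::metric_space" and f :: "'e \<Rightarrow> real"
  assumes N: "finite_measure N" and Xm: "\<And>t. t \<ge> 0 \<Longrightarrow> X t \<in> borel_measurable N"
    and rc: "\<And>\<omega> t. \<omega> \<in> space N \<Longrightarrow> t \<ge> 0 \<Longrightarrow> continuous (at_right t) (\<lambda>s. X s \<omega>)"
    and r: "r \<in> borel_measurable N" and r_bounds: "\<And>\<omega>. 0 \<le> r \<omega> \<and> r \<omega> \<le> T"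
    and f_cont: "continuous_on UNIV f" and f_bound: "\<And>y. \<bar>f y\<bar> \<le> B"
  shows "(\<integral>\<omega>. integral {0..r \<omega>} (\<lambda>s. f (X s \<omega>) - c) \<partial>N)
    = (\<integral>\<omega>. integral {0..r \<omega>} (\<lambda>s. f (X s \<omega>)) \<partial>N) - c * (\<integral>\<omega>. r \<omega> \<partial>N)"
proof -
  have "integral {0..r \<omega>} (\<lambda>s. f (X s \<omega>) - c) = integral {0..r \<omega>} (\<lambda>s. f (X s \<omega>)) - c * r \<omega>"
    if "\<omega> \<in> space N" for \<omega>
  proof -
    have "integral {0..r \<omega>} (\<lambda>s. f (X s \<omega>) - c)
        = integral {0..r \<omega>} (\<lambda>s. f (X s \<omega>)) - integral {0..r \<omega>} (\<lambda>s. c)"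
      by (rule integral_diff[OF path_integrable_on[OF rc[OF that] f_cont f_bound] integrable_const_ivl])
    then show ?thesis
      using r_bounds[of \<omega>] by (simp add: mult.commute)
  qed
  then have "(\<integral>\<omega>. integral {0..r \<omega>} (\<lambda>s. f (X s \<omega>) - c) \<partial>N)
      = (\<integral>\<omega>. integral {0..r \<omega>} (\<lambda>s. f (X s \<omega>)) - c * r \<omega> \<partial>N)"
    by (intro Bochner_Integration.integral_cong) auto
  moreover have "integrable N r"
    using N r r_bounds by (intro finite_measure.integrable_const_bound[where B=T] AE_I2) auto
  ultimately show ?thesis
    using integrable_path_integral[OF N Xm rc r r_bounds f_cont f_bound] by simp
qed

lemma ereal_le_div_of_penalty:
  fixes \<gamma> w :: ereal and c z \<epsilon> \<rho> :: real
  assumes "c < 0" "\<gamma> < \<infinity>" "w - ereal \<epsilon> \<le> \<gamma> + ereal (c * \<rho> + z)"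
  shows "ereal \<rho> \<le> (\<gamma> + ereal z - w + ereal \<epsilon>) / ereal (-c)"
  using assms by (cases w; cases \<gamma>) (auto simp: field_simps divide_ereal_def minus_ereal_def)

lemma enn2ereal_SUP_ennreal_le:
  assumes "\<And>n. ereal (r n) \<le> C" "\<And>n. 0 \<le> r n"
  shows "enn2ereal (SUP n::nat. ennreal (r n)) \<le> C"
proof (cases C)
  case (real c)
  then have "(SUP n. ennreal (r n)) \<le> ennreal c"
    using assms by (intro SUP_least ennreal_leI) auto
  then show ?thesis
    using real assms(1)[of 0] assms(2)[of 0] by (simp add: less_eq_ennreal.rep_eq)
qed (use assms in auto)


lemma reward_le_gamma_fn:
  "ext_stopping_time F \<sigma> \<Longrightarrow> reward M X (\<lambda>y. f y - d x) (\<lambda>_. 0) x \<sigma> \<le> gamma_fn M F X f d x"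
  unfolding gamma_fn_def value_fn_def by (rule SUP_upper) simp

lemma abs_stopped_le_zetaT:
  "0 \<le> T \<Longrightarrow> ennreal \<bar>g (X (stop_min \<sigma> T \<omega>) \<omega>)\<bar> \<le> zetaT g X T \<omega>"
  unfolding zetaT_def by (rule SUP_upper) (simp add: stop_min_nonneg stop_min_le)

lemma pos_stopped_le_zeta_plus:
  "ennreal (max 0 (g (X (stop_min \<sigma> T \<omega>) \<omega>))) \<le> zeta_plus g X \<omega>"
  unfolding zeta_plus_def by (rule SUP_upper) (simp add: stop_min_nonneg)

lemma integrable_stopped_process:
  fixes X :: "real \<Rightarrow> 'w \<Rightarrow> 'e::metric_space" and g :: "'e \<Rightarrow> real"
  assumes markov: "markov_process \<Omega> M F X" and g_cont: "continuous_on UNIV g"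
    and \<sigma>: "ext_stopping_time F \<sigma>" and "0 \<le> T"
    and tail: "(\<integral>\<^sup>+\<omega>. zetaT g X T \<omega> * indicator {\<omega>. zetaT g X T \<omega> > of_nat n} \<omega> \<partial>M x) < \<infinity>"
  shows "integrable (M x) (\<lambda>\<omega>. g (X (stop_min \<sigma> T \<omega>) \<omega>))"
proof (rule integrable_if_dominated_with_finite_tail[OF _ _ _ tail])
  show "finite_measure (M x)"
    using markov_process_prob_space[OF markov] by (rule prob_space.finite_measure)
  have "(\<lambda>\<omega>. X (stop_min \<sigma> T \<omega>) \<omega>) \<in> borel_measurable (M x)"
    by (rule borel_measurable_right_continuous_process_at[OF markov_process_measurable[OF markov]
          markov_process_right_continuous[OF markov]
          borel_measurable_stop_min[OF \<sigma> markov_process_subalgebra[OF markov] \<open>0 \<le> T\<close>]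
          stop_min_nonneg])
  then show "(\<lambda>\<omega>. g (X (stop_min \<sigma> T \<omega>) \<omega>)) \<in> borel_measurable (M x)"
    using borel_measurable_continuous_onI[OF g_cont] by (rule measurable_compose)
qed (rule abs_stopped_le_zetaT[OF \<open>0 \<le> T\<close>])

lemma reward_le_penalized_reward:
  fixes X :: "real \<Rightarrow> 'w \<Rightarrow> 'e::metric_space" and f g :: "'e \<Rightarrow> real" and c z T\<^sub>0 :: real
  assumes markov: "markov_process \<Omega> M F X" and \<sigma>: "ext_stopping_time F \<sigma>"
    and f_cont: "continuous_on UNIV f" and f_bdd: "bounded (range f)"
    and g_int: "\<And>T. T > 0 \<Longrightarrow> integrable (M x) (\<lambda>\<omega>. g (X (stop_min \<sigma> T \<omega>) \<omega>))"
    and g_le: "\<And>T. T > 0 \<Longrightarrow> (\<integral>\<omega>. g (X (stop_min \<sigma> T \<omega>) \<omega>) \<partial>M x) \<le> z"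
    and "c \<le> 0" "0 \<le> T\<^sub>0"
  shows "reward M X f g x \<sigma>
    \<le> reward M X (\<lambda>y. f y - c) (\<lambda>_. 0) x \<sigma> + ereal (c * (\<integral>\<omega>. stop_min \<sigma> T\<^sub>0 \<omega> \<partial>M x) + z)"
proof -
  interpret prob_space "M x"
    using markov by (rule markov_process_prob_space)
  obtain B where B: "\<And>y. \<bar>f y\<bar> \<le> B"
    using f_bdd by (auto simp: bounded_iff)
  note Xm = markov_process_measurable[OF markov] and rc = markov_process_right_continuous[OF markov]
  have r_meas: "stop_min \<sigma> T \<in> borel_measurable (M x)" if "T \<ge> 0" for T
    using \<sigma> markov_process_subalgebra[OF markov] that by (rule borel_measurable_stop_min)
  have r_int: "integrable (M x) (stop_min \<sigma> T)" if "T \<ge> 0" for T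
    using finite_measure_axioms r_meas[OF that] that by (rule integrable_stop_min)
  define I where "I T \<omega> = integral {0..stop_min \<sigma> T \<omega>} (\<lambda>s. f (X s \<omega>))" for T \<omega>
  define R where "R T = (\<integral>\<omega>. stop_min \<sigma> T \<omega> \<partial>M x)" for T
  have r_bounds: "0 \<le> stop_min \<sigma> T \<omega> \<and> stop_min \<sigma> T \<omega> \<le> T" if "T \<ge> 0" for T \<omega>
    by (intro conjI stop_min_nonneg stop_min_le that)
  have I_int: "integrable (M x) (I T)" if "T \<ge> 0" for T
    unfolding I_def using finite_measure_axioms Xm rc r_meas[OF that] r_bounds[OF that] f_cont B
    by (rule integrable_path_integral)
  have penalized: "(\<integral>\<omega>. integral {0..stop_min \<sigma> T \<omega>} (\<lambda>s. f (X s \<omega>) - c) + 0 \<partial>M x)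
      = (\<integral>\<omega>. I T \<omega> \<partial>M x) - c * R T" if "T \<ge> 0" for T
    using integral_path_integral_diff_const[OF finite_measure_axioms Xm rc r_meas[OF that]
        r_bounds[OF that] f_cont B]
    by (simp add: I_def R_def)
  have "eventually (\<lambda>T. ereal (\<integral>\<omega>. I T \<omega> + g (X (stop_min \<sigma> T \<omega>) \<omega>) \<partial>M x)
      \<le> ereal (\<integral>\<omega>. integral {0..stop_min \<sigma> T \<omega>} (\<lambda>s. f (X s \<omega>) - c) + 0 \<partial>M x) + ereal (c * R T\<^sub>0 + z))
      at_top"
    using eventually_ge_at_top[of "max 1 T\<^sub>0"]
  proof eventually_elim
    case (elim T)
    then have T: "T > 0" "T\<^sub>0 \<le> T" by auto
    have "R T\<^sub>0 \<le> R T"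
      unfolding R_def using r_int \<open>0 \<le> T\<^sub>0\<close> T by (intro integral_mono stop_min_mono) auto
    then have "c * R T \<le> c * R T\<^sub>0"
      using \<open>c \<le> 0\<close> by (rule mult_left_mono_neg)
    moreover have "(\<integral>\<omega>. I T \<omega> + g (X (stop_min \<sigma> T \<omega>) \<omega>) \<partial>M x)
        = (\<integral>\<omega>. I T \<omega> \<partial>M x) + (\<integral>\<omega>. g (X (stop_min \<sigma> T \<omega>) \<omega>) \<partial>M x)"
      using I_int g_int T by simp
    ultimately show ?case
      using g_le[OF T(1)] penalized T by simp
  qed
  then have "Liminf at_top (\<lambda>T. ereal (\<integral>\<omega>. I T \<omega> + g (X (stop_min \<sigma> T \<omega>) \<omega>) \<partial>M x))
      \<le> Liminf at_top (\<lambda>T. ereal (\<integral>\<omega>. integral {0..stop_min \<sigma> T \<omega>} (\<lambda>s. f (X s \<omega>) - c) + 0 \<partial>M x)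
          + ereal (c * R T\<^sub>0 + z))"
    by (rule Liminf_mono)
  also have "\<dots> = reward M X (\<lambda>y. f y - c) (\<lambda>_. 0) x \<sigma> + ereal (c * R T\<^sub>0 + z)"
    unfolding reward_def by (rule Liminf_add_ereal_right) simp_all
  finally show ?thesis
    by (simp add: reward_def I_def R_def)
qed

lemma expectation_stop_min_le:
  fixes X :: "real \<Rightarrow> 'w \<Rightarrow> 'e::metric_space" and f g d :: "'e \<Rightarrow> real" and z \<epsilon> T\<^sub>0 :: real
  assumes markov: "markov_process \<Omega> M F X" and \<sigma>: "ext_stopping_time F \<sigma>"
    and f_cont: "continuous_on UNIV f" and f_bdd: "bounded (range f)"
    and g_int: "\<And>T. T > 0 \<Longrightarrow> integrable (M x) (\<lambda>\<omega>. g (X (stop_min \<sigma> T \<omega>) \<omega>))"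
    and g_le: "\<And>T. T > 0 \<Longrightarrow> (\<integral>\<omega>. g (X (stop_min \<sigma> T \<omega>) \<omega>) \<partial>M x) \<le> z"
    and d_neg: "d x < 0" and gamma_finite: "gamma_fn M F X f d x < \<infinity>"
    and \<sigma>_opt: "reward M X f g x \<sigma> \<ge> value_fn M F X f g x - ereal \<epsilon>" and "0 \<le> T\<^sub>0"
  shows "ereal (\<integral>\<omega>. stop_min \<sigma> T\<^sub>0 \<omega> \<partial>M x)
    \<le> (gamma_fn M F X f d x + ereal z - value_fn M F X f g x + ereal \<epsilon>) / ereal (- d x)"
proof (rule ereal_le_div_of_penalty[OF d_neg gamma_finite])
  have "value_fn M F X f g x - ereal \<epsilon> \<le> reward M X f g x \<sigma>"
    by (rule \<sigma>_opt)
  also have "\<dots> \<le> reward M X (\<lambda>y. f y - d x) (\<lambda>_. 0) x \<sigma>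
      + ereal (d x * (\<integral>\<omega>. stop_min \<sigma> T\<^sub>0 \<omega> \<partial>M x) + z)"
    using markov \<sigma> f_cont f_bdd g_int g_le less_imp_le[OF d_neg] \<open>0 \<le> T\<^sub>0\<close>
    by (rule reward_le_penalized_reward)
  also have "\<dots> \<le> gamma_fn M F X f d x + ereal (d x * (\<integral>\<omega>. stop_min \<sigma> T\<^sub>0 \<omega> \<partial>M x) + z)"
    using reward_le_gamma_fn[OF \<sigma>] by (rule add_right_mono)
  finally show "value_fn M F X f g x - ereal \<epsilon>
      \<le> gamma_fn M F X f d x + ereal (d x * (\<integral>\<omega>. stop_min \<sigma> T\<^sub>0 \<omega> \<partial>M x) + z)" .
qed

theorem mainTheorem12:
  fixes \<Omega> :: "'w measure" and M :: "'e::metric_space \<Rightarrow> 'w measure"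
    and F :: "real \<Rightarrow> 'w measure" and X :: "real \<Rightarrow> 'w \<Rightarrow> 'e"
    and f g d :: "'e \<Rightarrow> real" and x :: 'e and \<epsilon> :: real and \<sigma> :: "'w \<Rightarrow> ennreal"
  assumes loc_compact: "locally_compact_space (euclidean :: 'e topology)"
    and markov: "markov_process \<Omega> M F X"
    and A1: "\<forall>t\<ge>0. \<forall>\<phi>\<in>C0. Ptr M X t \<phi> \<in> C0"
    and A2: "\<exists>\<mu> K h. prob_space \<mu> \<and> sets \<mu> = sets (borel :: 'e measure) \<and>
              (\<forall>y. K y > 0) \<and> (\<forall>C. compact C \<longrightarrow> bounded (K ` C)) \<and>
              (\<forall>t\<ge>0. h t \<ge> 0) \<and> h integrable_on {0..} \<and>
              (\<forall>y. \<forall>t\<ge>0. tv_dist (distr (M y) borel (X t)) \<mu> \<le> K y * h t) \<and>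
              (\<forall>y. \<forall>T\<ge>0. integrable (M y) (\<lambda>\<omega>. K (X T \<omega>)))"
    and f_cont: "continuous_on UNIV f" and f_bdd: "bounded (range f)"
    and g_cont: "continuous_on UNIV g"
    and B: "\<forall>T>0. \<forall>y. \<exists>\<delta>>0. compact (cball y \<delta>) \<and>
              (\<lambda>n. SUP z\<in>cball y \<delta>.
                   \<integral>\<^sup>+\<omega>. zetaT g X T \<omega> * indicator {\<omega>. zetaT g X T \<omega> > of_nat n} \<omega> \<partial>M z)
              \<longlonglongrightarrow> 0"
    and C1: "\<forall>y. zeta_plus g X \<in> borel_measurable (M y) \<and>
              (\<integral>\<^sup>+\<omega>. zeta_plus g X \<omega> \<partial>M y) < \<infinity>"
    and C2: "\<forall>y. \<forall>A :: real \<Rightarrow> 'w set. (\<forall>T\<ge>0. A T \<in> sets (F T)) \<longrightarrow>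
              ((\<lambda>T. measure (M y) (A T)) \<longlongrightarrow> 0) at_top \<longrightarrow>
              ((\<lambda>T. \<integral>\<^sup>+\<omega>. indicator (A T) \<omega> * ennreal (max 0 (- g (X T \<omega>))) \<partial>M y) \<longlongrightarrow> 0) at_top"
    and C3: "\<forall>y. d y < 0 \<and> gamma_fn M F X f d y < \<infinity>"
    and eps_pos: "\<epsilon> > 0"
    and sigma_st: "ext_stopping_time F \<sigma>"
    and sigma_opt: "reward M X f g x \<sigma> \<ge> value_fn M F X f g x - ereal \<epsilon>"
  shows "enn2ereal (\<integral>\<^sup>+\<omega>. \<sigma> \<omega> \<partial>M x)
           \<le> (gamma_fn M F X f d x + enn2ereal (\<integral>\<^sup>+\<omega>. zeta_plus g X \<omega> \<partial>M x)
               - value_fn M F X f g x + ereal \<epsilon>) / ereal (- d x)"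
proof -
  interpret prob_space "M x"
    using markov by (rule markov_process_prob_space)
  have d_neg: "d x < 0" and gamma_finite: "gamma_fn M F X f d x < \<infinity>"
    using C3 by auto
  define z where "z = enn2real (\<integral>\<^sup>+\<omega>. zeta_plus g X \<omega> \<partial>M x)"
  have zeta_plus_finite: "(\<integral>\<^sup>+\<omega>. zeta_plus g X \<omega> \<partial>M x) < \<infinity>"
    using C1 by simp
  have zeta_plus_eq: "enn2ereal (\<integral>\<^sup>+\<omega>. zeta_plus g X \<omega> \<partial>M x) = ereal z"
    using zeta_plus_finite unfolding z_def
    by (metis enn2ereal_ennreal enn2real_nonneg ennreal_enn2real infinity_ennreal_def)
  have g_int: "integrable (M x) (\<lambda>\<omega>. g (X (stop_min \<sigma> T \<omega>) \<omega>))" if T: "T > 0" for T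
  proof -
    obtain \<delta> where "\<delta> > 0" and tail: "(\<lambda>n. SUP z\<in>cball x \<delta>.
        \<integral>\<^sup>+\<omega>. zetaT g X T \<omega> * indicator {\<omega>. zetaT g X T \<omega> > of_nat n} \<omega> \<partial>M z) \<longlonglongrightarrow> 0"
      using B T by blast
    then obtain n where tail_n:
      "(\<integral>\<^sup>+\<omega>. zetaT g X T \<omega> * indicator {\<omega>. zetaT g X T \<omega> > of_nat n} \<omega> \<partial>M x) < \<infinity>"
      using ex_less_top_of_SUP_tendsto_zero[OF tail, of x] by auto
    show ?thesis
      using T by (intro integrable_stopped_process[OF markov g_cont sigma_st _ tail_n]) simp
  qed
  have g_le: "(\<integral>\<omega>. g (X (stop_min \<sigma> T \<omega>) \<omega>) \<partial>M x) \<le> z" if "T > 0" for T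
    unfolding z_def using g_int[OF that] pos_stopped_le_zeta_plus zeta_plus_finite
    by (rule integral_le_enn2real_nn_integral)
  have "enn2ereal (\<integral>\<^sup>+\<omega>. \<sigma> \<omega> \<partial>M x) = enn2ereal (SUP n. ennreal (\<integral>\<omega>. stop_min \<sigma> (real n) \<omega> \<partial>M x))"
    using finite_measure_axioms borel_measurable_stop_min[OF sigma_st markov_process_subalgebra[OF markov]]
    by (subst nn_integral_eq_SUP_integral_stop_min) auto
  also have "\<dots> \<le> (gamma_fn M F X f d x + ereal z - value_fn M F X f g x + ereal \<epsilon>) / ereal (- d x)"
    using expectation_stop_min_le[OF markov sigma_st f_cont f_bdd g_int g_le d_neg gamma_finite sigma_opt]
    by (intro enn2ereal_SUP_ennreal_le) (auto simp: stop_min_nonneg)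
  finally show ?thesis
    unfolding zeta_plus_eq .
qed

end
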